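(* Let $x_1,\dots,x_{N+1}$ be i.i.d. uniform on $\mathbb S^{d-1}$ and $x_{i^*}$ the element of $\{x_1,\dots,x_N\}$ maximizing $x_i^\top x_{N+1}$. There is an absolute constant $c>0$ such that if $N\ge c\sqrt d\log d$, then $\mathbb E[x_{i^*}^\top x_{N+1}]\ge\frac{2}{(N+1)^2}$.
   Context: $\mathbb S^{d-1}$ is the unit sphere in $\mathbb R^d$; equivalently $i^*=\arg\min_{i\in[N]}\|x_i-x_{N+1}\|_2$. *)

theory Defs
  imports "HOL-Probability.Probability"
begin

text \<open>Euclidean space R^d, vectors as extensional functions on {..<d}, with Lebesgue measure.\<close>
definition euclid_space :: "nat \<Rightarrow> (nat \<Rightarrow> real) measure" where
  "euclid_space d = PiM {..<d} (\<lambda>_. lborel)"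

definition sq_norm_d :: "nat \<Rightarrow> (nat \<Rightarrow> real) \<Rightarrow> real" where
  "sq_norm_d d x = (\<Sum>i<d. (x i)^2)"

definition unit_ball_d :: "nat \<Rightarrow> (nat \<Rightarrow> real) set" where
  "unit_ball_d d = {x \<in> space (euclid_space d). sq_norm_d d x \<le> 1}"

definition sph_normalize :: "nat \<Rightarrow> (nat \<Rightarrow> real) \<Rightarrow> (nat \<Rightarrow> real)" where
  "sph_normalize d x = (\<lambda>i. if i < d then x i / sqrt (sq_norm_d d x) else undefined)"

text \<open>Uniform (normalized surface = cone) probability measure on the unit sphere S^{d-1}:
  radial projection of the uniform distribution on the unit ball.\<close>
definition uniform_sphere :: "nat \<Rightarrow> (nat \<Rightarrow> real) measure" where
  "uniform_sphere d =
     distr (uniform_measure (euclid_space d) (unit_ball_d d)) (euclid_space d) (sph_normalize d)"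

end

theory Submission
  imports Defs
begin

(* Only two of the N candidates are needed. With X_l = <x_l, y> for y = x_(N+1), the maximum is at
   least max X_1 X_2, and on [-1, 1] we have max a b >= (a + b)/2 + (a - b)^2/4. The expectation of
   this polynomial is computed by independence: central symmetry of the sphere gives E X_l = 0 and
   E (X_1 X_2) = 0, while E X_l^2 = sum_(k,l) m_kl^2 for the second-moment matrix m of the
   distribution. Since trace m = E |v|^2 = 1, Cauchy-Schwarz gives sum_(k,l) m_kl^2 >= 1/d, so the
   expected maximum is at least 1/(2d). With c = 4 the hypothesis gives N >= 2 sqrt d, as ln d >= 1/2,
   hence (N+1)^2 >= 4d and 1/(2d) >= 2/(N+1)^2. *)

section \<open>The uniform distribution on the sphere\<close>

interpretation lborel_product: product_sigma_finite "\<lambda>_::nat. lborel"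
  by standard

lemma space_euclid_space: "space (euclid_space d) = {..<d} \<rightarrow>\<^sub>E UNIV"
  by (simp add: euclid_space_def space_PiM)

lemma measurable_euclid_space_component [measurable]:
  "k < d \<Longrightarrow> (\<lambda>x. x k) \<in> borel_measurable (euclid_space d)"
  unfolding euclid_space_def by (simp add: measurable_lborel2[symmetric])

lemma measurable_sq_norm_d [measurable]: "sq_norm_d d \<in> borel_measurable (euclid_space d)"
  unfolding sq_norm_d_def by measurable

lemma sets_unit_ball_d [measurable]: "unit_ball_d d \<in> sets (euclid_space d)"
  unfolding unit_ball_d_def by measurable

lemma measurable_into_euclid_space:
  assumes "\<And>k. k < d \<Longrightarrow> (\<lambda>x. f x k) \<in> borel_measurable M"
  shows "(\<lambda>x. \<lambda>k\<in>{..<d}. f x k) \<in> measurable M (euclid_space d)"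
  unfolding euclid_space_def using assms by (auto intro!: measurable_restrict simp: measurable_lborel2)

lemma measurable_sph_normalize [measurable]:
  "sph_normalize d \<in> measurable (euclid_space d) (euclid_space d)"
proof -
  have "sph_normalize d = (\<lambda>x. \<lambda>k\<in>{..<d}. x k / sqrt (sq_norm_d d x))"
    by (auto simp: sph_normalize_def fun_eq_iff)
  then show ?thesis
    by (simp add: measurable_into_euclid_space)
qed

definition negate_d :: "nat \<Rightarrow> (nat \<Rightarrow> real) \<Rightarrow> (nat \<Rightarrow> real)" where
  "negate_d d x = (\<lambda>k\<in>{..<d}. - x k)"

lemma measurable_negate_d [measurable]: "negate_d d \<in> measurable (euclid_space d) (euclid_space d)"
  unfolding negate_d_def by (simp add: measurable_into_euclid_space)

lemma sq_le_sq_norm_d: "k < d \<Longrightarrow> (x k)\<^sup>2 \<le> sq_norm_d d x"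
  unfolding sq_norm_d_def by (intro member_le_sum) auto

lemma emeasure_unit_ball_d_finite: "emeasure (euclid_space d) (unit_ball_d d) < \<infinity>"
proof -
  have "unit_ball_d d \<subseteq> {..<d} \<rightarrow>\<^sub>E {-1..1}"
  proof (intro subsetI PiE_I)
    fix x k assume "x \<in> unit_ball_d d" "k \<in> {..<d}"
    then have "(x k)\<^sup>2 \<le> 1"
      using sq_le_sq_norm_d[of k d x] by (auto simp: unit_ball_d_def)
    then show "x k \<in> {-1..1}"
      by (simp add: abs_square_le_1 abs_le_iff)
  qed (auto simp: unit_ball_d_def space_euclid_space)
  then have "emeasure (euclid_space d) (unit_ball_d d) \<le> emeasure (euclid_space d) ({..<d} \<rightarrow>\<^sub>E {-1..1})"
    by (intro emeasure_mono) (auto simp: euclid_space_def)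
  also have "\<dots> = (\<Prod>k<d. emeasure lborel {-1..1::real})"
    unfolding euclid_space_def by (subst lborel_product.emeasure_PiM) auto
  also have "\<dots> < \<infinity>"
    by (simp add: less_top[symmetric] ennreal_prod_eq_top power_eq_top_ennreal)
  finally show ?thesis .
qed

lemma emeasure_unit_ball_d_pos:
  assumes "d \<ge> 1"
  shows "emeasure (euclid_space d) (unit_ball_d d) \<noteq> 0"
proof -
  let ?r = "1 / real d"
  have "{..<d} \<rightarrow>\<^sub>E {-?r..?r} \<subseteq> unit_ball_d d"
  proof
    fix x assume x: "x \<in> {..<d} \<rightarrow>\<^sub>E {-?r..?r}"
    have "(x k)\<^sup>2 \<le> ?r\<^sup>2" if "k < d" for k
    proof -
      have "x k \<in> {-?r..?r}"
        using x that by (simp add: PiE_iff)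
      then have "\<bar>x k\<bar> \<le> ?r"
        unfolding atLeastAtMost_iff abs_le_iff by linarith
      then show ?thesis
        by (simp add: power2_le_iff_abs_le)
    qed
    then have "sq_norm_d d x \<le> (\<Sum>k<d. ?r\<^sup>2)"
      unfolding sq_norm_d_def by (intro sum_mono) simp
    also have "\<dots> = ?r"
      using assms by (simp add: power2_eq_square)
    also have "\<dots> \<le> 1"
      using assms by simp
    finally show "x \<in> unit_ball_d d"
      using x by (simp add: unit_ball_d_def space_euclid_space PiE_iff)
  qed
  then have "emeasure (euclid_space d) ({..<d} \<rightarrow>\<^sub>E {-?r..?r}) \<le> emeasure (euclid_space d) (unit_ball_d d)"
    by (intro emeasure_mono) auto
  moreover have "emeasure (euclid_space d) ({..<d} \<rightarrow>\<^sub>E {-?r..?r}) = (\<Prod>k<d. emeasure lborel {-?r..?r})"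
    unfolding euclid_space_def by (subst lborel_product.emeasure_PiM) auto
  moreover have "(\<Prod>k<d. emeasure lborel {-?r..?r}) \<noteq> 0"
    using assms by (simp add: prod_zero_iff)
  ultimately show ?thesis
    by (metis le_zero_eq)
qed

lemma prob_space_uniform_sphere: "d \<ge> 1 \<Longrightarrow> prob_space (uniform_sphere d)"
  unfolding uniform_sphere_def
  by (intro prob_space.prob_space_distr prob_space_uniform_measure measurable_sph_normalize
      emeasure_unit_ball_d_pos emeasure_unit_ball_d_finite[THEN less_imp_neq]) auto

lemma sets_uniform_sphere [simp, measurable_cong]: "sets (uniform_sphere d) = sets (euclid_space d)"
  by (simp add: uniform_sphere_def)

lemma AE_euclid_space_sq_norm_nonzero:
  assumes "d \<ge> 1"
  shows "AE x in euclid_space d. sq_norm_d d x \<noteq> 0"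
proof (rule AE_I')
  let ?Z = "PiE {..<d} (\<lambda>k. if k = 0 then {0} else UNIV)"
  have "emeasure (euclid_space d) ?Z = (\<Prod>k<d. emeasure lborel (if k = 0 then {0} else (UNIV :: real set)))"
    unfolding euclid_space_def by (subst lborel_product.emeasure_PiM) auto
  also have "\<dots> = 0"
    using assms by (auto simp: prod_zero_iff intro!: bexI[of _ 0])
  finally show "?Z \<in> null_sets (euclid_space d)"
    by (auto simp: null_sets_def euclid_space_def)
  show "{x \<in> space (euclid_space d). \<not> sq_norm_d d x \<noteq> 0} \<subseteq> ?Z"
  proof (intro subsetI PiE_I)
    fix x k assume x: "x \<in> {x \<in> space (euclid_space d). \<not> sq_norm_d d x \<noteq> 0}"
    then have "x 0 = 0"
      using sq_le_sq_norm_d[of 0 d x] assms by simp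
    then show "x k \<in> (if k = 0 then {0} else UNIV)"
      by simp
    show "k \<notin> {..<d} \<Longrightarrow> x k = undefined"
      using x by (auto simp: space_euclid_space)
  qed
qed

lemma sq_norm_sph_normalize:
  assumes "sq_norm_d d x \<noteq> 0"
  shows "sq_norm_d d (sph_normalize d x) = 1"
proof -
  have "sq_norm_d d x \<ge> 0"
    by (simp add: sq_norm_d_def sum_nonneg)
  then have "sq_norm_d d (sph_normalize d x) = (\<Sum>k<d. (x k)\<^sup>2) / sq_norm_d d x"
    by (simp add: sq_norm_d_def sph_normalize_def power_divide flip: sum_divide_distrib)
  then show ?thesis
    using assms by (simp add: sq_norm_d_def)
qed

lemma AE_uniform_sphere_sq_norm:
  assumes "d \<ge> 1"
  shows "AE v in uniform_sphere d. sq_norm_d d v = 1"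
proof -
  have "AE x in uniform_measure (euclid_space d) (unit_ball_d d). sq_norm_d d (sph_normalize d x) = 1"
    using AE_euclid_space_sq_norm_nonzero[OF assms]
    by (intro AE_uniform_measureI) (auto elim!: AE_mp intro: sq_norm_sph_normalize)
  then show ?thesis
    unfolding uniform_sphere_def by (simp add: AE_distr_iff)
qed

lemma distr_negate_euclid_space: "distr (euclid_space d) (euclid_space d) (negate_d d) = euclid_space d"
  unfolding euclid_space_def
proof (rule lborel_product.PiM_eqI)
  fix A :: "nat \<Rightarrow> real set"
  assume A: "\<And>k. k \<in> {..<d} \<Longrightarrow> A k \<in> sets lborel"
  have neg_A: "uminus -` A k \<in> sets lborel" "emeasure lborel (uminus -` A k) = emeasure lborel (A k)"
    if "k \<in> {..<d}" for k
    using A[OF that] emeasure_distr[of uminus lborel borel "A k"] measurable_sets_borel[of uminus borel "A k"]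
    by (auto simp: lborel_distr_uminus)
  have "negate_d d \<in> measurable (\<Pi>\<^sub>M k\<in>{..<d}. lborel) (\<Pi>\<^sub>M k\<in>{..<d}. lborel)"
    using measurable_negate_d[of d] by (simp add: euclid_space_def)
  then have "emeasure (distr (\<Pi>\<^sub>M k\<in>{..<d}. lborel) (\<Pi>\<^sub>M k\<in>{..<d}. lborel) (negate_d d)) (PiE {..<d} A)
      = emeasure (\<Pi>\<^sub>M k\<in>{..<d}. lborel) (negate_d d -` PiE {..<d} A \<inter> space (\<Pi>\<^sub>M k\<in>{..<d}. lborel))"
    using A by (intro emeasure_distr) (auto intro: sets_PiM_I_finite)
  also have "negate_d d -` PiE {..<d} A \<inter> space (\<Pi>\<^sub>M k\<in>{..<d}. lborel) = PiE {..<d} (\<lambda>k. uminus -` A k)"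
    by (auto simp: negate_d_def space_PiM PiE_iff extensional_def)
  also have "emeasure (\<Pi>\<^sub>M k\<in>{..<d}. lborel) \<dots> = (\<Prod>k<d. emeasure lborel (A k))"
    using neg_A by (subst lborel_product.emeasure_PiM) (auto intro!: prod.cong)
  finally show "emeasure (distr (\<Pi>\<^sub>M k\<in>{..<d}. lborel) (\<Pi>\<^sub>M k\<in>{..<d}. lborel) (negate_d d)) (PiE {..<d} A)
      = (\<Prod>k<d. emeasure lborel (A k))" .
qed simp_all

lemma distr_uniform_measure_invariant:
  assumes f: "f \<in> measurable M M" and preserving: "distr M M f = M"
    and A: "A \<in> sets M" and invariant: "f -` A \<inter> space M = A \<inter> space M"
  shows "distr (uniform_measure M A) M f = uniform_measure M A"
proof (rule measure_eqI)
  fix S assume "S \<in> sets (distr (uniform_measure M A) M f)"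
  then have S: "S \<in> sets M" by simp
  have "A \<inter> (f -` S \<inter> space M) = f -` (A \<inter> S) \<inter> space M"
    using invariant by blast
  then have "emeasure M (A \<inter> (f -` S \<inter> space M)) = emeasure (distr M M f) (A \<inter> S)"
    using A S f by (simp add: emeasure_distr)
  then show "emeasure (distr (uniform_measure M A) M f) S = emeasure (uniform_measure M A) S"
    using A S f by (simp add: emeasure_distr preserving measurable_sets)
qed simp

lemma distr_negate_uniform_sphere:
  "distr (uniform_sphere d) (euclid_space d) (negate_d d) = uniform_sphere d"
proof -
  let ?U = "uniform_measure (euclid_space d) (unit_ball_d d)"
  have "negate_d d -` unit_ball_d d \<inter> space (euclid_space d) = unit_ball_d d \<inter> space (euclid_space d)"
    by (auto simp: unit_ball_d_def sq_norm_d_def negate_d_def space_euclid_space)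
  then have U_symmetric: "distr ?U (euclid_space d) (negate_d d) = ?U"
    by (intro distr_uniform_measure_invariant) (simp_all add: distr_negate_euclid_space)
  have "distr (uniform_sphere d) (euclid_space d) (negate_d d) = distr ?U (euclid_space d) (negate_d d \<circ> sph_normalize d)"
    unfolding uniform_sphere_def by (rule distr_distr) auto
  also have "\<dots> = distr ?U (euclid_space d) (sph_normalize d \<circ> negate_d d)"
    by (rule distr_cong) (auto simp: negate_d_def sph_normalize_def sq_norm_d_def fun_eq_iff)
  also have "\<dots> = distr (distr ?U (euclid_space d) (negate_d d)) (euclid_space d) (sph_normalize d)"
    by (rule distr_distr[symmetric]) auto
  finally show ?thesis
    by (simp add: U_symmetric uniform_sphere_def)
qed

lemma integral_uniform_sphere_component:
  assumes "k < d"
  shows "(\<integral>v. v k \<partial>uniform_sphere d) = 0"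
proof -
  have "(\<integral>v. v k \<partial>uniform_sphere d) = (\<integral>v. negate_d d v k \<partial>uniform_sphere d)"
    by (subst (1) distr_negate_uniform_sphere[symmetric]) (use assms in \<open>simp add: integral_distr\<close>)
  then show ?thesis
    using assms by (simp add: negate_d_def)
qed

section \<open>Expectations of products and of maxima\<close>

lemma integral_sum_sum:
  fixes f :: "'i \<Rightarrow> 'j \<Rightarrow> 'a \<Rightarrow> real"
  assumes "\<And>k l. k \<in> A \<Longrightarrow> l \<in> B \<Longrightarrow> integrable M (f k l)"
  shows "(\<integral>x. (\<Sum>k\<in>A. \<Sum>l\<in>B. f k l x) \<partial>M) = (\<Sum>k\<in>A. \<Sum>l\<in>B. integral\<^sup>L M (f k l))"
  using assms by (subst Bochner_Integration.integral_sum) (auto intro!: sum.cong)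

lemma (in product_prob_space) product_integral_prod_subset:
  fixes f :: "'i \<Rightarrow> 'a \<Rightarrow> real"
  assumes "finite I" "J \<subseteq> I" "\<And>i. i \<in> J \<Longrightarrow> integrable (M i) (f i)"
  shows "integrable (PiM I M) (\<lambda>x. \<Prod>i\<in>J. f i (x i))"
    and "(\<integral>x. (\<Prod>i\<in>J. f i (x i)) \<partial>PiM I M) = (\<Prod>i\<in>J. integral\<^sup>L (M i) (f i))"
proof -
  define g where "g i = (if i \<in> J then f i else (\<lambda>_. 1))" for i
  have g_integrable: "integrable (M i) (g i)" for i
    using assms(3) by (simp add: g_def)
  have "(\<Prod>i\<in>I. g i (x i)) = (\<Prod>i\<in>J. f i (x i))" for x
    using assms(1,2) by (intro prod.mono_neutral_cong_right) (auto simp: g_def)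
  moreover have "(\<Prod>i\<in>I. integral\<^sup>L (M i) (g i)) = (\<Prod>i\<in>J. integral\<^sup>L (M i) (f i))"
    using assms(1,2) by (intro prod.mono_neutral_cong_right) (auto simp: g_def M.prob_space)
  ultimately show "integrable (PiM I M) (\<lambda>x. \<Prod>i\<in>J. f i (x i))"
    and "(\<integral>x. (\<Prod>i\<in>J. f i (x i)) \<partial>PiM I M) = (\<Prod>i\<in>J. integral\<^sup>L (M i) (f i))"
    using product_integrable_prod[OF assms(1) g_integrable] product_integral_prod[OF assms(1) g_integrable]
    by simp_all
qed

lemma (in product_prob_space) product_integral_pair:
  fixes f g :: "'a \<Rightarrow> real"
  assumes "finite I" "i \<in> I" "j \<in> I" "i \<noteq> j" "integrable (M i) f" "integrable (M j) g"
  shows "integrable (PiM I M) (\<lambda>x. f (x i) * g (x j))"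
    and "(\<integral>x. f (x i) * g (x j) \<partial>PiM I M) = integral\<^sup>L (M i) f * integral\<^sup>L (M j) g"
proof -
  have "integrable (M m) (if m = i then f else g)" if "m \<in> {i, j}" for m
    using that assms by auto
  from product_integral_prod_subset[where J = "{i, j}", OF assms(1) _ this] assms
  show "integrable (PiM I M) (\<lambda>x. f (x i) * g (x j))"
    and "(\<integral>x. f (x i) * g (x j) \<partial>PiM I M) = integral\<^sup>L (M i) f * integral\<^sup>L (M j) g"
    by simp_all
qed

lemma (in product_prob_space) product_integral_triple:
  fixes f g h :: "'a \<Rightarrow> real"
  assumes "finite I" "i \<in> I" "j \<in> I" "l \<in> I" "i \<noteq> j" "i \<noteq> l" "j \<noteq> l"
    and "integrable (M i) f" "integrable (M j) g" "integrable (M l) h"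
  shows "integrable (PiM I M) (\<lambda>x. f (x i) * g (x j) * h (x l))"
    and "(\<integral>x. f (x i) * g (x j) * h (x l) \<partial>PiM I M)
      = integral\<^sup>L (M i) f * integral\<^sup>L (M j) g * integral\<^sup>L (M l) h"
proof -
  have "integrable (M m) (if m = i then f else if m = j then g else h)" if "m \<in> {i, j, l}" for m
    using that assms by auto
  from product_integral_prod_subset[where J = "{i, j, l}", OF assms(1) _ this] assms
  show "integrable (PiM I M) (\<lambda>x. f (x i) * g (x j) * h (x l))"
    and "(\<integral>x. f (x i) * g (x j) * h (x l) \<partial>PiM I M)
      = integral\<^sup>L (M i) f * integral\<^sup>L (M j) g * integral\<^sup>L (M l) h"
    by (simp_all add: mult.assoc)
qed

lemma max_ge_mean_plus_sq_diff:
  fixes a b :: real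
  assumes "\<bar>a\<bar> \<le> 1" "\<bar>b\<bar> \<le> 1"
  shows "(a + b) / 2 + (a - b)\<^sup>2 / 4 \<le> max a b"
proof -
  have "(a - b)\<^sup>2 = \<bar>a - b\<bar> * \<bar>a - b\<bar>"
    by (simp add: power2_eq_square)
  also have "\<dots> \<le> 2 * \<bar>a - b\<bar>"
    using assms by (intro mult_right_mono) auto
  finally have "(a - b)\<^sup>2 / 4 \<le> \<bar>a - b\<bar> / 2"
    by simp
  moreover have "max a b = (a + b) / 2 + \<bar>a - b\<bar> / 2"
    by (simp add: max_def abs_if field_simps)
  ultimately show ?thesis
    by linarith
qed

lemma (in prob_space) expectation_max_ge_moments:
  fixes X Y :: "'a \<Rightarrow> real"
  assumes [measurable]: "random_variable borel X" "random_variable borel Y"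
    and bounded: "AE x in M. \<bar>X x\<bar> \<le> 1 \<and> \<bar>Y x\<bar> \<le> 1"
  shows "(expectation X + expectation Y) / 2
      + (expectation (\<lambda>x. (X x)\<^sup>2) + expectation (\<lambda>x. (Y x)\<^sup>2) - 2 * expectation (\<lambda>x. X x * Y x)) / 4
    \<le> expectation (\<lambda>x. max (X x) (Y x))"
proof -
  have integrable_bounded: "integrable M f"
    if [measurable]: "random_variable borel f" and "\<And>x. \<bar>X x\<bar> \<le> 1 \<and> \<bar>Y x\<bar> \<le> 1 \<Longrightarrow> \<bar>f x\<bar> \<le> 1"
    for f :: "'a \<Rightarrow> real"
    using bounded by (intro integrable_const_bound[where B = 1]) (auto elim!: AE_mp intro: that(2))
  have integrable: "integrable M X" "integrable M Y" "integrable M (\<lambda>x. (X x)\<^sup>2)"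
    "integrable M (\<lambda>x. (Y x)\<^sup>2)" "integrable M (\<lambda>x. X x * Y x)" "integrable M (\<lambda>x. max (X x) (Y x))"
    by (auto intro!: integrable_bounded simp: abs_mult mult_le_one abs_square_le_1)
  have "(expectation X + expectation Y) / 2
      + (expectation (\<lambda>x. (X x)\<^sup>2) + expectation (\<lambda>x. (Y x)\<^sup>2) - 2 * expectation (\<lambda>x. X x * Y x)) / 4
    = expectation (\<lambda>x. (X x + Y x) / 2 + ((X x)\<^sup>2 + (Y x)\<^sup>2 - 2 * (X x * Y x)) / 4)"
    using integrable by (simp add: Bochner_Integration.integral_add Bochner_Integration.integral_diff)
  also have "\<dots> \<le> expectation (\<lambda>x. max (X x) (Y x))"
  proof (rule integral_mono_AE)
    show "AE x in M. (X x + Y x) / 2 + ((X x)\<^sup>2 + (Y x)\<^sup>2 - 2 * (X x * Y x)) / 4 \<le> max (X x) (Y x)"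
      using bounded by eventually_elim (use max_ge_mean_plus_sq_diff in \<open>simp add: power2_diff mult.assoc\<close>)
  qed (use integrable in auto)
  finally show ?thesis .
qed

lemma (in prob_space) expectation_max_le_expectation_Max:
  fixes f :: "'i \<Rightarrow> 'a \<Rightarrow> real"
  assumes "finite J" "i \<in> J" "j \<in> J"
    and [measurable]: "\<And>l. l \<in> J \<Longrightarrow> random_variable borel (f l)"
    and bounded: "AE x in M. \<forall>l\<in>J. \<bar>f l x\<bar> \<le> B"
  shows "expectation (\<lambda>x. max (f i x) (f j x)) \<le> expectation (\<lambda>x. Max ((\<lambda>l. f l x) ` J))"
proof (rule integral_mono_AE)
  show "integrable M (\<lambda>x. max (f i x) (f j x))"
  proof (rule integrable_const_bound[where B = B])
    show "AE x in M. norm (max (f i x) (f j x)) \<le> B"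
      using bounded by eventually_elim (use assms(2,3) in \<open>auto simp: max_def\<close>)
  qed (use assms(2,3) in simp)
  have Max_in_image: "Max ((\<lambda>l. f l x) ` J) \<in> (\<lambda>l. f l x) ` J" for x
    using assms(1,2) by (intro Max_in) auto
  show "integrable M (\<lambda>x. Max ((\<lambda>l. f l x) ` J))"
  proof (rule integrable_const_bound[where B = B])
    show "AE x in M. norm (Max ((\<lambda>l. f l x) ` J)) \<le> B"
      using bounded
    proof eventually_elim
      fix x assume "\<forall>l\<in>J. \<bar>f l x\<bar> \<le> B"
      moreover obtain l where "l \<in> J" "Max ((\<lambda>l. f l x) ` J) = f l x"
        using Max_in_image[of x] by blast
      ultimately show "norm (Max ((\<lambda>l. f l x) ` J)) \<le> B"
        by simp
    qed
  qed (use assms(1) in \<open>auto intro: borel_measurable_Max\<close>)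
qed (use assms in \<open>auto simp: Max_ge_iff\<close>)

section \<open>Centred distributions on the sphere\<close>

definition inner_d :: "nat \<Rightarrow> (nat \<Rightarrow> real) \<Rightarrow> (nat \<Rightarrow> real) \<Rightarrow> real" where
  "inner_d d u v = (\<Sum>k<d. u k * v k)"

lemma abs_inner_d_le_1:
  assumes "sq_norm_d d u = 1" "sq_norm_d d v = 1"
  shows "\<bar>inner_d d u v\<bar> \<le> 1"
proof -
  have "(inner_d d u v)\<^sup>2 \<le> sq_norm_d d u * sq_norm_d d v"
    unfolding inner_d_def sq_norm_d_def by (rule Cauchy_Schwarz_ineq_sum)
  then show ?thesis
    using assms by (simp add: abs_square_le_1)
qed

lemma inner_d_mult_inner_d:
  "inner_d d a c * inner_d d b c = (\<Sum>k<d. \<Sum>l<d. a k * b l * (c k * c l))"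
  unfolding inner_d_def sum_product by (simp add: algebra_simps)

locale centered_sphere_measure = prob_space M for M :: "(nat \<Rightarrow> real) measure" +
  fixes d :: nat
  assumes sets_eq_euclid_space [measurable_cong]: "sets M = sets (euclid_space d)"
    and AE_sq_norm: "AE v in M. sq_norm_d d v = 1"
    and integral_component: "k < d \<Longrightarrow> (\<integral>v. v k \<partial>M) = 0"
begin

definition moment :: "nat \<Rightarrow> nat \<Rightarrow> real" where
  "moment k l = (\<integral>v. v k * v l \<partial>M)"

lemma measurable_component [measurable]: "k < d \<Longrightarrow> (\<lambda>v. v k) \<in> borel_measurable M"
  by measurable

lemma AE_abs_component_le_1:
  assumes "k < d"
  shows "AE v in M. \<bar>v k\<bar> \<le> 1"
  using AE_sq_norm
proof eventually_elim
  fix v assume "sq_norm_d d v = 1"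
  then show "\<bar>v k\<bar> \<le> 1"
    using sq_le_sq_norm_d[OF assms, of v] by (simp add: abs_square_le_1)
qed

lemma integrable_component: "k < d \<Longrightarrow> integrable M (\<lambda>v. v k)"
  by (rule integrable_const_bound[where B = 1]) (simp_all add: AE_abs_component_le_1)

lemma integrable_component_mult:
  assumes "k < d" "l < d"
  shows "integrable M (\<lambda>v. v k * v l)"
proof (rule integrable_const_bound[where B = 1])
  show "AE v in M. norm (v k * v l) \<le> 1"
    using AE_abs_component_le_1[OF assms(1)] AE_abs_component_le_1[OF assms(2)]
    by eventually_elim (simp add: abs_mult mult_le_one)
qed (use assms in simp)

lemma sum_moment_diag: "(\<Sum>k<d. moment k k) = 1"
proof -
  have "(\<Sum>k<d. moment k k) = (\<integral>v. sq_norm_d d v \<partial>M)"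
    unfolding moment_def sq_norm_d_def power2_eq_square
    by (simp add: integrable_component_mult)
  also have "\<dots> = (\<integral>v. 1 \<partial>M)"
    using AE_sq_norm by (intro integral_cong_AE) auto
  finally show ?thesis
    by (simp add: prob_space)
qed

lemma sum_sq_moment_ge: "1 \<le> real d * (\<Sum>k<d. \<Sum>l<d. (moment k l)\<^sup>2)"
proof -
  have "1 = (\<Sum>k<d. moment k k * 1)\<^sup>2"
    by (simp add: sum_moment_diag)
  also have "\<dots> \<le> (\<Sum>k<d. (moment k k)\<^sup>2) * (\<Sum>k<d. 1\<^sup>2)"
    by (rule Cauchy_Schwarz_ineq_sum)
  also have "\<dots> = real d * (\<Sum>k<d. (moment k k)\<^sup>2)"
    by simp
  also have "\<dots> \<le> real d * (\<Sum>k<d. \<Sum>l<d. (moment k l)\<^sup>2)"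
    by (intro mult_left_mono sum_mono member_le_sum) auto
  finally show ?thesis .
qed

lemma product_prob_space_const: "product_prob_space (\<lambda>_. M)"
  by (intro product_prob_spaceI prob_space_axioms)

lemma AE_PiM_sq_norm:
  assumes "finite I"
  shows "AE x in PiM I (\<lambda>_. M). \<forall>l\<in>I. sq_norm_d d (x l) = 1"
  using assms AE_sq_norm
  by (intro AE_finite_allI AE_PiM_component) (auto intro: prob_space_imp_sigma_finite prob_space_axioms)

lemma measurable_inner_d_PiM [measurable]:
  assumes "i \<in> I" "y \<in> I"
  shows "(\<lambda>x. inner_d d (x i) (x y)) \<in> borel_measurable (PiM I (\<lambda>_. M))"
proof -
  have "(\<lambda>x. x m k) \<in> borel_measurable (PiM I (\<lambda>_. M))" if "m \<in> I" "k < d" for m k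
    using measurable_compose[OF measurable_component_singleton[OF that(1)] measurable_component[OF that(2)]] .
  then show ?thesis
    unfolding inner_d_def using assms by (intro borel_measurable_sum borel_measurable_times) auto
qed

lemma integral_inner_d:
  assumes "finite I" "i \<in> I" "y \<in> I" "i \<noteq> y"
  shows "(\<integral>x. inner_d d (x i) (x y) \<partial>PiM I (\<lambda>_. M)) = 0"
proof -
  interpret product_prob_space "\<lambda>_. M" I
    by (rule product_prob_space_const)
  note pair = product_integral_pair[OF assms integrable_component integrable_component]
  show ?thesis
    unfolding inner_d_def
    by (subst Bochner_Integration.integral_sum) (simp_all add: pair integral_component)
qed

lemma integral_inner_d_sq:
  assumes "finite I" "i \<in> I" "y \<in> I" "i \<noteq> y"
  shows "(\<integral>x. (inner_d d (x i) (x y))\<^sup>2 \<partial>PiM I (\<lambda>_. M)) = (\<Sum>k<d. \<Sum>l<d. (moment k l)\<^sup>2)"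
proof -
  interpret product_prob_space "\<lambda>_. M" I
    by (rule product_prob_space_const)
  note pair = product_integral_pair[OF assms integrable_component_mult integrable_component_mult]
  have int: "integrable (PiM I (\<lambda>_. M)) (\<lambda>x. x i k * x i l * (x y k * x y l))"
    and val: "(\<integral>x. x i k * x i l * (x y k * x y l) \<partial>PiM I (\<lambda>_. M)) = (moment k l)\<^sup>2"
    if "k < d" "l < d" for k l
    using pair[of k l k l] that by (simp_all add: moment_def power2_eq_square)
  show ?thesis
    unfolding power2_eq_square[of "inner_d d _ _"] inner_d_mult_inner_d
    by (subst integral_sum_sum) (simp_all add: int val)
qed

lemma integral_inner_d_mult:
  assumes "finite I" "i \<in> I" "j \<in> I" "y \<in> I" "i \<noteq> j" "i \<noteq> y" "j \<noteq> y"
  shows "(\<integral>x. inner_d d (x i) (x y) * inner_d d (x j) (x y) \<partial>PiM I (\<lambda>_. M)) = 0"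
proof -
  interpret product_prob_space "\<lambda>_. M" I
    by (rule product_prob_space_const)
  note triple = product_integral_triple[OF assms integrable_component integrable_component
      integrable_component_mult]
  have int: "integrable (PiM I (\<lambda>_. M)) (\<lambda>x. x i k * x j l * (x y k * x y l))"
    and val: "(\<integral>x. x i k * x j l * (x y k * x y l) \<partial>PiM I (\<lambda>_. M)) = 0"
    if "k < d" "l < d" for k l
    using triple[of k l k l] that by (simp_all add: integral_component)
  show ?thesis
    unfolding inner_d_mult_inner_d
    by (subst integral_sum_sum) (simp_all add: int val)
qed

lemma integral_Max_inner_d_ge:
  assumes "finite J" "i \<in> J" "j \<in> J" "i \<noteq> j" "y \<notin> J"
  shows "1 / (2 * real d) \<le> (\<integral>x. Max ((\<lambda>l. inner_d d (x l) (x y)) ` J) \<partial>PiM (insert y J) (\<lambda>_. M))"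
proof -
  let ?P = "PiM (insert y J) (\<lambda>_. M)"
  interpret P: prob_space ?P
    by (intro prob_space_PiM prob_space_axioms)
  have I: "finite (insert y J)" "i \<in> insert y J" "j \<in> insert y J" "y \<in> insert y J" "i \<noteq> y" "j \<noteq> y"
    using assms by auto
  define X where "X l = (\<lambda>x. inner_d d (x l) (x y))" for l
  define S where "S = (\<Sum>k<d. \<Sum>l<d. (moment k l)\<^sup>2)"
  have X_measurable [measurable]: "X l \<in> borel_measurable ?P" if "l \<in> insert y J" for l
    using that by (simp add: X_def)
  have X_bounded: "\<bar>X l x\<bar> \<le> 1" if "\<forall>m\<in>insert y J. sq_norm_d d (x m) = 1" "l \<in> insert y J" for l x
    using that by (auto simp: X_def intro!: abs_inner_d_le_1)
  have "1 / (2 * real d) \<le> S / 2"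
    using sum_sq_moment_ge unfolding S_def by (cases "d = 0") (simp_all add: field_simps)
  also have "S / 2 = (P.expectation (X i) + P.expectation (X j)) / 2
      + (P.expectation (\<lambda>x. (X i x)\<^sup>2) + P.expectation (\<lambda>x. (X j x)\<^sup>2)
        - 2 * P.expectation (\<lambda>x. X i x * X j x)) / 4"
    unfolding X_def S_def using I assms(4)
    by (simp add: integral_inner_d integral_inner_d_sq integral_inner_d_mult)
  also have "\<dots> \<le> P.expectation (\<lambda>x. max (X i x) (X j x))"
    using AE_PiM_sq_norm[OF I(1)] I by (intro P.expectation_max_ge_moments) (auto elim!: AE_mp simp: X_bounded)
  also have "\<dots> \<le> P.expectation (\<lambda>x. Max ((\<lambda>l. X l x) ` J))"
    using AE_PiM_sq_norm[OF I(1)] assms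
    by (intro P.expectation_max_le_expectation_Max[where B = 1]) (auto elim!: AE_mp simp: X_bounded)
  finally show ?thesis
    by (simp add: X_def)
qed

end

lemma centered_sphere_measure_uniform_sphere:
  "d \<ge> 1 \<Longrightarrow> centered_sphere_measure (uniform_sphere d) d"
  unfolding centered_sphere_measure_def centered_sphere_measure_axioms_def
  by (simp add: prob_space_uniform_sphere AE_uniform_sphere_sq_norm integral_uniform_sphere_component)

lemma sample_size_lower_bounds:
  assumes "d \<ge> 2" "4 * sqrt (real d) * ln (real d) \<le> real N"
  shows "2 \<le> N" "4 * real d \<le> (real N + 1)\<^sup>2"
proof -
  have "1 / 2 \<le> ln (2 :: real)"
    using ln2_ge_two_thirds by linarith
  also have "\<dots> \<le> ln (real d)"
    using assms(1) by simp
  finally have "4 * sqrt (real d) * (1 / 2) \<le> 4 * sqrt (real d) * ln (real d)"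
    by (intro mult_left_mono) auto
  then have N_ge: "2 * sqrt (real d) \<le> real N"
    using assms(2) by linarith
  moreover have "1 < sqrt (real d)"
    using assms(1) by simp
  ultimately show "2 \<le> N"
    by linarith
  have "4 * real d = (2 * sqrt (real d))\<^sup>2"
    by (simp add: power_mult_distrib)
  also have "\<dots> \<le> (real N + 1)\<^sup>2"
    using N_ge by (intro power_mono) auto
  finally show "4 * real d \<le> (real N + 1)\<^sup>2" .
qed

theorem lemma18:
  shows "\<exists>c::real > 0. \<forall>(d::nat) (N::nat).
           d \<ge> 2 \<and> real N \<ge> c * sqrt (real d) * ln (real d) \<longrightarrow>
           (\<integral>x. Max ((\<lambda>i. \<Sum>k<d. x i k * x (N + 1) k) ` {1..N})
              \<partial>(PiM {1..N+1} (\<lambda>_. uniform_sphere d)))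
             \<ge> 2 / (real N + 1)^2"
proof (intro exI[of _ 4] conjI allI impI)
  fix d N :: nat
  assume "d \<ge> 2 \<and> real N \<ge> 4 * sqrt (real d) * ln (real d)"
  then have d: "d \<ge> 2" and N: "2 \<le> N" "4 * real d \<le> (real N + 1)\<^sup>2"
    using sample_size_lower_bounds by auto
  interpret centered_sphere_measure "uniform_sphere d" d
    using d by (intro centered_sphere_measure_uniform_sphere) simp
  have "2 / (real N + 1)\<^sup>2 \<le> 1 / (2 * real d)"
    using N(2) d by (simp add: field_simps)
  also have "\<dots> \<le> (\<integral>x. Max ((\<lambda>l. inner_d d (x l) (x (N + 1))) ` {1..N})
      \<partial>PiM (insert (N + 1) {1..N}) (\<lambda>_. uniform_sphere d))"
    using N(1) by (intro integral_Max_inner_d_ge[of _ 1 2]) auto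
  also have "insert (N + 1) {1..N} = {1..N + 1}"
    by auto
  finally show "(\<integral>x. Max ((\<lambda>i. \<Sum>k<d. x i k * x (N + 1) k) ` {1..N})
      \<partial>(PiM {1..N+1} (\<lambda>_. uniform_sphere d))) \<ge> 2 / (real N + 1)^2"
    by (simp add: inner_d_def)
qed simp

end
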